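(* Let $n\in\mathbb N_0$ and $j\in\{-n,\dots,n\}$. If $n+j$ is odd, then $\widetilde P_n^j(0)=0$. Otherwise, \[ \frac{2n+1}{2\pi^2\sqrt{(n+1)^2-j^2}} \le \left|\widetilde P_n^j(0)\right|^2 \le \frac{2n+1}{4\pi\sqrt{(n+1)^2-j^2}}. \] Furthermore, for every $j\in\mathbb N_0$, $\lim_{n\to\infty,\ n+j\text{ even}} \left|\widetilde P_n^j(0)\right| = \frac1\pi$.
   Context: Associated Legendre functions: $P_n^k(t)=\frac{(-1)^k}{2^n n!}(1-t^2)^{k/2}\frac{d^{n+k}}{dt^{n+k}}(t^2-1)^n$ for $n\in\mathbb N_0$, $k=0,\dots,n$, $t\in[-1,1]$. Normalized versions: $\widetilde P_n^k=\sqrt{\frac{2n+1}{4\pi}\frac{(n-k)!}{(n+k)!}}\,P_n^k$ for $k=0,\dots,n$, and $\widetilde P_n^{-k}=(-1)^k\widetilde P_n^k$. *)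

theory Defs
  imports "HOL-Analysis.Analysis"
begin

definition assoc_legendre :: "nat \<Rightarrow> nat \<Rightarrow> real \<Rightarrow> real" where
  "assoc_legendre n k t =
     (-1)^k / (2^n * fact n) * sqrt (1 - t^2) ^ k
       * (deriv ^^ (n + k)) (\<lambda>x. (x^2 - 1)^n) t"

definition norm_assoc_legendre :: "nat \<Rightarrow> int \<Rightarrow> real \<Rightarrow> real" where
  "norm_assoc_legendre n j t =
     (let k = nat \<bar>j\<bar>;
          Pk = sqrt ((2 * real n + 1) / (4 * pi) * (fact (n - k) / fact (n + k)))
               * assoc_legendre n k t
      in if j \<ge> 0 then Pk else (-1)^k * Pk)"

end

theory Submission
  imports Defs "HOL-Computational_Algebra.Polynomial" "HOL-Real_Asymp.Real_Asymp"
begin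

text \<open>At \<open>t = 0\<close> the derivative in Rodrigues' formula is \<open>(n+k)!\<close> times a Taylor
  coefficient of \<open>(t\<^sup>2 - 1)\<^sup>n\<close>, which vanishes unless \<open>n + k = 2a\<close> is even. Then, with
  \<open>n - k = 2b\<close>, the square of the normalized value is \<open>(2n+1)/(4\<pi>) c\<^sub>a c\<^sub>b\<close>, where
  \<open>c\<^sub>a = (2a choose a)/4\<^sup>a\<close>. By telescoping, \<open>c\<^sub>a\<^sup>2 (2a+1) W\<^sub>a = 1\<close> for the
  Wallis partial products \<open>W\<^sub>a\<close>, which increase from 1 to \<open>\<pi>/2\<close>; since
  \<open>(n+1)\<^sup>2 - k\<^sup>2 = (2a+1)(2b+1)\<close>, both bounds and the limit follow.\<close>

lemma higher_deriv_poly: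
  "(deriv ^^ m) (poly p) = poly ((pderiv ^^ m) (p :: 'a :: real_normed_field poly))"
proof (induction m arbitrary: p)
  case (Suc m)
  have "deriv (poly p) = poly (pderiv p)"
    by (intro ext DERIV_imp_deriv poly_DERIV)
  then show ?case by (simp only: funpow_Suc_right comp_def Suc)
qed simp

lemma higher_deriv_poly_0:
  "(deriv ^^ m) (poly p) 0 = fact m * coeff (p :: 'a :: real_normed_field poly) m"
  by (simp add: higher_deriv_poly poly_0_coeff_0 coeff_higher_pderiv pochhammer_fact)

definition sq_minus_one_pow_poly :: "nat \<Rightarrow> real poly" where
  "sq_minus_one_pow_poly n = (\<Sum>i\<le>n. monom (of_nat (n choose i) * (-1)^(n-i)) (2*i))"

lemma poly_sq_minus_one_pow_poly: "poly (sq_minus_one_pow_poly n) = (\<lambda>x. (x^2 - 1)^n)"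
proof
  fix x :: real
  have "(x^2 - 1)^n = (x^2 + (-1))^n" by simp
  also have "\<dots> = (\<Sum>i\<le>n. of_nat (n choose i) * (x^2)^i * (-1)^(n-i))"
    by (rule binomial_ring)
  finally show "poly (sq_minus_one_pow_poly n) x = (x^2 - 1)^n"
    by (simp add: sq_minus_one_pow_poly_def poly_sum poly_monom power_mult[symmetric] mult_ac)
qed

lemma coeff_sq_minus_one_pow_poly_odd:
  "odd m \<Longrightarrow> coeff (sq_minus_one_pow_poly n) m = 0"
  by (auto simp add: sq_minus_one_pow_poly_def coeff_sum coeff_monom intro!: sum.neutral)

lemma coeff_sq_minus_one_pow_poly_even:
  "i \<le> n \<Longrightarrow> coeff (sq_minus_one_pow_poly n) (2 * i) = of_nat (n choose i) * (-1)^(n-i)"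
  by (simp add: sq_minus_one_pow_poly_def coeff_sum coeff_monom sum.delta)

lemma assoc_legendre_0_odd:
  assumes "odd (n + k)"
  shows "assoc_legendre n k 0 = 0"
  using assms
  by (simp add: assoc_legendre_def higher_deriv_poly_0 coeff_sq_minus_one_pow_poly_odd
      flip: poly_sq_minus_one_pow_poly)

lemma assoc_legendre_0_even:
  assumes "n + k = 2 * a" "n - k = 2 * b" "k \<le> n"
  shows "assoc_legendre n k 0 = (-1)^(k + b) * fact (2 * a) / (2^n * fact a * fact b)"
proof -
  have a: "a \<le> n" "n - a = b" using assms by linarith+
  have "assoc_legendre n k 0 = (-1)^k / (2^n * fact n) * (fact (2 * a) * (of_nat (n choose a) * (-1)^b))"
    using a
    by (simp add: assoc_legendre_def higher_deriv_poly_0 assms(1) coeff_sq_minus_one_pow_poly_even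
        flip: poly_sq_minus_one_pow_poly)
  also have "of_nat (n choose a) = (fact n / (fact a * fact b) :: real)"
    using binomial_fact[OF a(1)] a(2) by simp
  finally show ?thesis by (simp add: power_add field_simps)
qed

lemma norm_assoc_legendre_sq:
  "(norm_assoc_legendre n j t)^2
     = (2 * real n + 1) / (4 * pi) * (fact (n - nat \<bar>j\<bar>) / fact (n + nat \<bar>j\<bar>))
       * (assoc_legendre n (nat \<bar>j\<bar>) t)^2"
  by (simp add: norm_assoc_legendre_def Let_def power_mult_distrib real_sqrt_pow2 flip: power_mult)

definition central_binom_ratio :: "nat \<Rightarrow> real" where
  "central_binom_ratio a = fact (2 * a) / (fact a ^ 2 * 4 ^ a)"

definition wallis_partial :: "nat \<Rightarrow> real" where
  "wallis_partial a = (\<Prod>k=1..a. 4 * real k ^ 2 / (4 * real k ^ 2 - 1))"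

lemma central_binom_ratio_Suc:
  "central_binom_ratio (Suc a) = central_binom_ratio a * (2 * real a + 1) / (2 * real a + 2)"
proof -
  have num: "fact (2 * Suc a) = fact (2 * a) * ((2 * real a + 1) * (2 * real a + 2))"
    by (simp add: algebra_simps)
  have den: "fact (Suc a) ^ 2 * 4 ^ Suc a = fact a ^ 2 * 4 ^ a * ((2 * real a + 2) * (2 * real a + 2))"
    by (simp add: power2_eq_square algebra_simps)
  have "fact a ^ 2 * 4 ^ a > (0::real)" by simp
  then show ?thesis
    unfolding central_binom_ratio_def num den by (simp add: divide_simps)
qed

lemma wallis_partial_Suc:
  "wallis_partial (Suc a)
     = wallis_partial a * (2 * real a + 2)^2 / ((2 * real a + 1) * (2 * real a + 3))"
proof -
  have "4 * real (Suc a) ^ 2 - 1 = (2 * real a + 1) * (2 * real a + 3)"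
    by (simp add: algebra_simps power2_eq_square)
  then show ?thesis
    by (simp add: wallis_partial_def power2_eq_square algebra_simps)
qed

lemma central_binom_ratio_sq_wallis:
  "central_binom_ratio a ^ 2 * (2 * real a + 1) * wallis_partial a = 1"
proof (induction a)
  case 0
  show ?case by (simp add: central_binom_ratio_def wallis_partial_def)
next
  case (Suc a)
  define c where "c = central_binom_ratio a"
  define w where "w = wallis_partial a"
  define p where "p = 2 * real a + 1"
  define q where "q = 2 * real a + 2"
  define r where "r = 2 * real a + 3"
  have "p \<noteq> 0" "q \<noteq> 0" "r \<noteq> 0" by (simp_all add: p_def q_def r_def add_pos_nonneg)
  have "central_binom_ratio (Suc a) ^ 2 * (2 * real (Suc a) + 1) * wallis_partial (Suc a)
      = (c * p / q)^2 * r * (w * q^2 / (p * r))"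
    by (simp only: central_binom_ratio_Suc wallis_partial_Suc c_def w_def p_def q_def r_def
        of_nat_Suc) (simp add: algebra_simps)
  also have "\<dots> = c^2 * p * w"
    using \<open>p \<noteq> 0\<close> \<open>q \<noteq> 0\<close> \<open>r \<noteq> 0\<close> by (simp add: field_simps power2_eq_square)
  finally show ?case using Suc by (simp add: c_def w_def p_def)
qed

lemma wallis_partial_ge_1: "wallis_partial a \<ge> 1"
  unfolding wallis_partial_def
proof (rule prod_ge_1)
  fix k assume "k \<in> {1..a}"
  then have "4 * real k ^ 2 \<ge> 4" by simp
  then show "1 \<le> 4 * real k ^ 2 / (4 * real k ^ 2 - 1)" by simp
qed

lemma wallis_partial_Suc_ge: "wallis_partial a \<le> wallis_partial (Suc a)"
proof -
  have "(2 * real a + 1) * (2 * real a + 3) \<le> (2 * real a + 2)^2"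
    by (simp add: power2_eq_square algebra_simps)
  then show ?thesis
    using wallis_partial_ge_1[of a] by (simp add: wallis_partial_Suc le_divide_eq mult_left_mono)
qed

lemma wallis_partial_tendsto: "wallis_partial \<longlonglongrightarrow> pi / 2"
  unfolding wallis_partial_def[abs_def] by (rule wallis)

lemma wallis_partial_le_pi_half: "wallis_partial a \<le> pi / 2"
  by (rule incseq_le[OF incseq_SucI wallis_partial_tendsto]) (rule wallis_partial_Suc_ge)

lemma central_binom_ratio_eq_wallis:
  "central_binom_ratio a = 1 / sqrt ((2 * real a + 1) * wallis_partial a)"
proof -
  have "central_binom_ratio a ^ 2 = 1 / ((2 * real a + 1) * wallis_partial a)"
    using central_binom_ratio_sq_wallis[of a] wallis_partial_ge_1[of a]
    by (simp add: eq_divide_eq mult_ac)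
  then have "sqrt (1 / ((2 * real a + 1) * wallis_partial a)) = central_binom_ratio a"
    by (intro real_sqrt_unique) (simp_all add: central_binom_ratio_def)
  then show ?thesis
    by (simp add: real_sqrt_divide)
qed

lemma norm_assoc_legendre_0_sq_central_binom:
  assumes "n + nat \<bar>j\<bar> = 2 * a" "n - nat \<bar>j\<bar> = 2 * b" "nat \<bar>j\<bar> \<le> n"
  shows "(norm_assoc_legendre n j 0)^2
           = (2 * real n + 1) / (4 * pi) * central_binom_ratio a * central_binom_ratio b"
proof -
  have "n = a + b" using assms by linarith
  have "((2::real)^n)^2 = 4^n"
    by (simp add: power2_eq_square flip: power_mult_distrib)
  also have "\<dots> = 4^a * 4^b"
    using \<open>n = a + b\<close> by (simp add: power_add)
  finally have four: "((2::real)^n)^2 = 4^a * 4^b" .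
  have "(assoc_legendre n (nat \<bar>j\<bar>) 0)^2 = fact (2 * a)^2 / (4^a * 4^b * fact a^2 * fact b^2)"
    unfolding assoc_legendre_0_even[OF assms] power_divide power_mult_distrib four
    by (simp flip: power_mult)
  then show ?thesis
    unfolding norm_assoc_legendre_sq assms(1,2) central_binom_ratio_def
    by (simp add: power2_eq_square mult_ac)
qed

lemma norm_assoc_legendre_0_sq_even:
  assumes "n + nat \<bar>j\<bar> = 2 * a" "n - nat \<bar>j\<bar> = 2 * b" "nat \<bar>j\<bar> \<le> n"
  shows "(norm_assoc_legendre n j 0)^2
           = (2 * real n + 1)
             / (4 * pi * sqrt ((real n + 1)^2 - (real_of_int j)^2)
                * sqrt (wallis_partial a * wallis_partial b))"
proof -
  have "n = a + b" "nat \<bar>j\<bar> + b = a"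
    using assms by linarith+
  then have n: "real n = real a + real b" and "real a = \<bar>real_of_int j\<bar> + real b"
    by (simp_all only: of_nat_add)
  then have j: "(real_of_int j)^2 = (real a - real b)^2"
    by simp
  have "(real n + 1)^2 - (real_of_int j)^2 = (2 * real a + 1) * (2 * real b + 1)"
    unfolding n j by (simp add: power2_eq_square algebra_simps)
  then show ?thesis
    unfolding norm_assoc_legendre_0_sq_central_binom[OF assms] central_binom_ratio_eq_wallis
    by (simp add: real_sqrt_mult mult_ac)
qed

lemma even_add_nat_abs_iff: "even (n + nat \<bar>j\<bar>) \<longleftrightarrow> even (int n + j)"
proof -
  have "even (n + nat \<bar>j\<bar>) \<longleftrightarrow> even (int n + \<bar>j\<bar>)"
    by (metis even_of_nat_iff int_nat_eq abs_ge_zero of_nat_add)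
  also have "\<dots> \<longleftrightarrow> even (int n + j)"
    by (cases "j \<ge> 0") auto
  finally show ?thesis .
qed

lemma norm_assoc_legendre_0_odd:
  assumes "odd (int n + j)"
  shows "norm_assoc_legendre n j 0 = 0"
proof -
  have "assoc_legendre n (nat \<bar>j\<bar>) 0 = 0"
    using assms by (intro assoc_legendre_0_odd) (simp add: even_add_nat_abs_iff)
  then have "(norm_assoc_legendre n j 0)^2 = 0"
    by (simp add: norm_assoc_legendre_sq)
  then show ?thesis by simp
qed

lemma norm_assoc_legendre_0_sq_bounds:
  assumes "\<bar>j\<bar> \<le> int n" "even (int n + j)"
  shows "(2 * real n + 1) / (2 * pi^2 * sqrt ((real n + 1)^2 - (real_of_int j)^2))
           \<le> \<bar>norm_assoc_legendre n j 0\<bar>^2"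
    and "\<bar>norm_assoc_legendre n j 0\<bar>^2
           \<le> (2 * real n + 1) / (4 * pi * sqrt ((real n + 1)^2 - (real_of_int j)^2))"
proof -
  obtain a b where ab: "n + nat \<bar>j\<bar> = 2 * a" "n - nat \<bar>j\<bar> = 2 * b"
    using assms even_add_nat_abs_iff[of n j] by (metis evenE even_diff_nat)
  have "nat \<bar>j\<bar> \<le> n" using assms(1) by linarith
  define R where "R = sqrt ((real n + 1)^2 - (real_of_int j)^2)"
  define q where "q = sqrt (wallis_partial a * wallis_partial b)"
  have N: "\<bar>norm_assoc_legendre n j 0\<bar>^2 = (2 * real n + 1) / (4 * pi * R * q)"
    using norm_assoc_legendre_0_sq_even[OF ab \<open>nat \<bar>j\<bar> \<le> n\<close>] by (simp add: R_def q_def)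
  have "\<bar>real_of_int j\<bar> < real n + 1" using assms(1) by linarith
  then have "\<bar>real_of_int j\<bar>^2 < (real n + 1)^2"
    by (intro power_strict_mono) auto
  then have "(real_of_int j)^2 < (real n + 1)^2" by simp
  then have "R > 0" by (simp add: R_def)
  have "1 * 1 \<le> wallis_partial a * wallis_partial b"
    using wallis_partial_ge_1 by (intro mult_mono) (auto intro: order_trans[OF zero_le_one])
  then have "1 \<le> q" by (simp add: q_def)
  have "q \<le> sqrt ((pi / 2)^2)"
    unfolding q_def power2_eq_square using wallis_partial_ge_1 wallis_partial_le_pi_half
    by (intro real_sqrt_le_mono mult_mono) (auto intro: order_trans[OF zero_le_one])
  then have "q \<le> pi / 2" by simp
  show "(2 * real n + 1) / (2 * pi^2 * R) \<le> \<bar>norm_assoc_legendre n j 0\<bar>^2"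
    unfolding N using \<open>R > 0\<close> \<open>1 \<le> q\<close> \<open>q \<le> pi / 2\<close>
    by (intro divide_left_mono) (auto simp: power2_eq_square)
  show "\<bar>norm_assoc_legendre n j 0\<bar>^2 \<le> (2 * real n + 1) / (4 * pi * R)"
    unfolding N using \<open>R > 0\<close> \<open>1 \<le> q\<close>
    by (intro divide_left_mono) auto
qed

lemma norm_assoc_legendre_0_tendsto:
  "((\<lambda>n. \<bar>norm_assoc_legendre n (int j) 0\<bar>) \<longlongrightarrow> 1 / pi)
     (inf sequentially (principal {n. even (n + j)}))"
proof -
  define h where "h n = (2 * real n + 1) / sqrt ((real n + 1)^2 - (real j)^2)" for n
  define q where "q n = sqrt (wallis_partial ((n + j) div 2) * wallis_partial ((n - j) div 2))" for n
  have "filterlim (\<lambda>n. (n + j) div 2) sequentially sequentially"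
    and "filterlim (\<lambda>n. (n - j) div 2) sequentially sequentially"
    by (rule filterlim_compose[OF filterlim_at_top_div_const_nat[of 2]],
        simp_all add: filterlim_add_const_nat_at_top filterlim_minus_const_nat_at_top)+
  then have "q \<longlonglongrightarrow> sqrt (pi / 2 * (pi / 2))"
    unfolding q_def by (intro tendsto_intros filterlim_compose[OF wallis_partial_tendsto])
  moreover have "h \<longlonglongrightarrow> 2"
    unfolding h_def by real_asymp
  ultimately have "(\<lambda>n. sqrt (h n / (4 * pi * q n))) \<longlonglongrightarrow> sqrt (2 / (4 * pi * sqrt (pi / 2 * (pi / 2))))"
    by (intro tendsto_intros) simp_all
  also have "sqrt (2 / (4 * pi * sqrt (pi / 2 * (pi / 2)))) = 1 / pi"
    by (simp add: real_sqrt_divide power2_eq_square flip: real_sqrt_mult)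
  finally have "((\<lambda>n. sqrt (h n / (4 * pi * q n))) \<longlongrightarrow> 1 / pi)
                  (inf sequentially (principal {n. even (n + j)}))"
    by (rule tendsto_mono[rotated]) simp
  moreover have "\<forall>\<^sub>F n in inf sequentially (principal {n. even (n + j)}).
                   sqrt (h n / (4 * pi * q n)) = \<bar>norm_assoc_legendre n (int j) 0\<bar>"
    unfolding eventually_inf_principal eventually_sequentially
  proof (intro exI[of _ j] allI impI)
    fix n assume "j \<le> n" "n \<in> {n. even (n + j)}"
    then have "n + nat \<bar>int j\<bar> = 2 * ((n + j) div 2)" "n - nat \<bar>int j\<bar> = 2 * ((n - j) div 2)"
      "nat \<bar>int j\<bar> \<le> n"
      by auto
    from norm_assoc_legendre_0_sq_even[OF this]
    have "\<bar>norm_assoc_legendre n (int j) 0\<bar>^2 = h n / (4 * pi * q n)"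
      by (simp add: h_def q_def)
    then show "sqrt (h n / (4 * pi * q n)) = \<bar>norm_assoc_legendre n (int j) 0\<bar>"
      by (metis abs_ge_zero real_sqrt_abs abs_idempotent)
  qed
  ultimately show ?thesis
    by (rule Lim_transform_eventually)
qed

theorem lemma1:
  shows "(\<forall>(n::nat) (j::int). - int n \<le> j \<and> j \<le> int n \<longrightarrow>
            (odd (int n + j) \<longrightarrow> norm_assoc_legendre n j 0 = 0) \<and>
            (even (int n + j) \<longrightarrow>
               (2 * real n + 1) / (2 * pi^2 * sqrt ((real n + 1)^2 - (real_of_int j)^2))
                 \<le> \<bar>norm_assoc_legendre n j 0\<bar>^2 \<and>
               \<bar>norm_assoc_legendre n j 0\<bar>^2
                 \<le> (2 * real n + 1) / (4 * pi * sqrt ((real n + 1)^2 - (real_of_int j)^2))))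
         \<and> (\<forall>j::nat. ((\<lambda>n. \<bar>norm_assoc_legendre n (int j) 0\<bar>) \<longlongrightarrow> 1 / pi)
                        (inf sequentially (principal {n. even (n + j)})))"
proof (intro conjI allI impI)
  fix n :: nat and j :: int
  assume "- int n \<le> j \<and> j \<le> int n"
  then have "\<bar>j\<bar> \<le> int n" by linarith
  show "norm_assoc_legendre n j 0 = 0" if "odd (int n + j)"
    using that by (rule norm_assoc_legendre_0_odd)
  show "(2 * real n + 1) / (2 * pi^2 * sqrt ((real n + 1)^2 - (real_of_int j)^2))
          \<le> \<bar>norm_assoc_legendre n j 0\<bar>^2"
   and "\<bar>norm_assoc_legendre n j 0\<bar>^2
          \<le> (2 * real n + 1) / (4 * pi * sqrt ((real n + 1)^2 - (real_of_int j)^2))"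
    if "even (int n + j)"
    using norm_assoc_legendre_0_sq_bounds[OF \<open>\<bar>j\<bar> \<le> int n\<close> that] by simp_all
qed (rule norm_assoc_legendre_0_tendsto)

end
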